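(* Let $\epsilon>0$ and $n\ge1$. Consider mechanisms $Q:\mathbb{R}^n\to\Delta(\mathbb{R}^n)$ of the form $Qu=u+V$, where the noise $V$ has distribution $g\in\Delta(\mathbb{R}^n)$ independent of the input $u$, and suppose $Q$ is $\epsilon$-Lipschitz private with respect to the $\ell_2$-norm on $\mathbb{R}^n$. Then $$\mathbb{E}_{V\sim g}\|V\|_2^2\;\ge\;\mathbb{E}_{V\sim l_2^n}\|V\|_2^2=\frac{n(n+1)}{\epsilon^2},$$ where $l_2^n$ is the probability density on $\mathbb{R}^n$ proportional to $e^{-\epsilon\|v\|_2}$, namely $l_2^n(v)=\frac{\epsilon^n\Gamma(\frac n2+1)}{\pi^{n/2}\Gamma(n+1)}e^{-\epsilon\|v\|_2}$; i.e. the mechanism adding noise with density $l_2^n$ minimizes the mean-squared error for the identity query $q(u)=u$ among all such mechanisms.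
   Context: $\Delta(\mathcal{Y})$ denotes the set of Borel probability measures on $\mathcal{Y}$. For a normed space $(\mathcal{U},\|\cdot\|)$, a mechanism $Q:\mathcal{U}\to\Delta(\mathcal{Y})$ is $\epsilon$-Lipschitz private if for all $u,u'\in\mathcal{U}$ and all measurable $\mathcal{S}\subseteq\mathcal{Y}$, $|\ln\mathbb{P}(Qu\in\mathcal{S})-\ln\mathbb{P}(Qu'\in\mathcal{S})|\le\epsilon\|u-u'\|$, equivalently $\mathbb{P}(Qu\in\mathcal{S})\le e^{\epsilon\|u-u'\|}\mathbb{P}(Qu'\in\mathcal{S})$. *)

theory Defs
  imports "HOL-Probability.Probability"
begin

definition lipschitz_private ::
  "real \<Rightarrow> ('a::real_normed_vector \<Rightarrow> 'b measure) \<Rightarrow> bool" where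
  "lipschitz_private eps Q \<longleftrightarrow>
     (\<forall>u u'. \<forall>S \<in> sets (Q u).
        measure (Q u) S \<le> exp (eps * norm (u - u')) * measure (Q u') S)"

definition additive_mech :: "'a::euclidean_space measure \<Rightarrow> 'a \<Rightarrow> 'a measure" where
  "additive_mech g u = distr g borel (\<lambda>v. u + v)"

definition l2_density :: "real \<Rightarrow> real^'n \<Rightarrow> real" where
  "l2_density eps v =
     eps ^ CARD('n) * Gamma (real CARD('n) / 2 + 1)
     / (pi powr (real CARD('n) / 2) * Gamma (real CARD('n) + 1))
     * exp (- eps * norm v)"

end

theory Submission
  imports Defs
begin

(* In polar coordinates, a density of the form H (x / |x|) * exp (- eps * |x|) on R^n has second
   moment n (n + 1) / eps^2 times its mass, since the radial integrals of r^(n+1) e^(-eps r) and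
   r^(n-1) e^(-eps r) differ by that factor; this also gives the second moment of l_2^n.
   A density h with h a <= exp (eps |a - b|) h b is compared with its radial exponential extension
   G x = h (rho x / |x|) * exp (eps (rho - |x|)) from the sphere of radius rho, rho^2 = n (n + 1) / eps^2:
   the constraint forces (h - G) (|x|^2 - rho^2) >= 0 pointwise. Integrating, the terms in G cancel
   because G is of the above form, which leaves E_h |x|^2 >= rho^2.
   A general noise distribution g need not have a density, so it is first smoothed with the kernel
   l_2^n of parameter 1 / d. The smoothed density inherits the constraint from the privacy of the
   mechanism, and its second moment is at most (1 + d) E_g |V|^2 + n (n + 1) (d + d^2); let d -> 0. *)

section \<open>Integration in polar coordinates\<close>

lemma nn_integral_lborel_affine:
  fixes f :: "'a::euclidean_space \<Rightarrow> ennreal" and c :: real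
  assumes [measurable]: "f \<in> borel_measurable borel" and c: "c \<noteq> 0"
  shows "(\<integral>\<^sup>+x. f x \<partial>lborel) = ennreal (\<bar>c\<bar> ^ DIM('a)) * (\<integral>\<^sup>+x. f (t + c *\<^sub>R x) \<partial>lborel)"
  by (subst lborel_affine[OF c, of t])
     (simp add: nn_integral_density nn_integral_distr nn_integral_cmult)

lemma nn_integral_lborel_translate:
  fixes f :: "'a::euclidean_space \<Rightarrow> ennreal"
  assumes "f \<in> borel_measurable borel"
  shows "(\<integral>\<^sup>+x. f x \<partial>lborel) = (\<integral>\<^sup>+x. f (t + x) \<partial>lborel)"
  using nn_integral_lborel_affine[OF assms, of 1 t] by simp

lemma nn_integral_homogeneous_ball:
  fixes H :: "'a::euclidean_space \<Rightarrow> ennreal"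
  assumes [measurable]: "H \<in> borel_measurable borel"
    and hom: "\<And>t x. t > 0 \<Longrightarrow> H (t *\<^sub>R x) = H x" and r: "r > 0"
  shows "(\<integral>\<^sup>+x. H x * indicator (ball 0 r) x \<partial>lborel)
       = ennreal (r ^ DIM('a)) * (\<integral>\<^sup>+x. H x * indicator (ball 0 1) x \<partial>lborel)"
proof -
  have [measurable]: "ball (0::'a) r \<in> sets borel"
    by simp
  have "(\<integral>\<^sup>+x. H x * indicator (ball 0 r) x \<partial>lborel)
      = ennreal (r ^ DIM('a)) * (\<integral>\<^sup>+x. H (r *\<^sub>R x) * indicator (ball 0 r) (r *\<^sub>R x) \<partial>lborel)"
    using r by (subst nn_integral_lborel_affine[where c=r and t=0]) auto
  also have "(\<lambda>x. H (r *\<^sub>R x) * indicator (ball 0 r) (r *\<^sub>R x)) = (\<lambda>x. H x * indicator (ball 0 1) x)"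
    using r by (auto simp: hom indicator_def fun_eq_iff)
  finally show ?thesis .
qed

lemma nn_integral_radial_weight_lessThan:
  assumes "n > 0"
  shows "(\<integral>\<^sup>+r. ennreal (real n * r ^ (n - 1)) * indicator {0..} r * indicator {..<a} r \<partial>lborel)
       = ennreal (if a > 0 then a ^ n else 0)"
proof (cases "a > 0")
  case True
  have "(\<integral>\<^sup>+r. ennreal (real n * r ^ (n - 1)) * indicator {0..} r * indicator {..<a} r \<partial>lborel)
      = (\<integral>\<^sup>+r. ennreal (real n * r ^ (n - 1)) * indicator {0..a} r \<partial>lborel)"
    by (intro nn_integral_cong_AE eventually_mono[OF AE_lborel_singleton[of a]])
       (auto simp: indicator_def)
  also have "\<dots> = ennreal (a ^ n - 0 ^ n)"
    using True assms by (intro nn_integral_FTC_Icc) (auto intro!: derivative_eq_intros)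
  finally show ?thesis
    using True assms by simp
next
  case False
  then have "(\<lambda>r. ennreal (real n * r ^ (n - 1)) * indicator {0..} r * indicator {..<a} r) = (\<lambda>_. 0)"
    by (auto simp: fun_eq_iff indicator_def)
  with False show ?thesis
    by simp
qed

lemma distr_norm_density_homogeneous:
  fixes H :: "'a::euclidean_space \<Rightarrow> ennreal"
  defines "\<kappa> \<equiv> \<integral>\<^sup>+x. H x * indicator (ball 0 1) x \<partial>lborel"
  assumes [measurable]: "H \<in> borel_measurable borel"
    and hom: "\<And>t x. t > 0 \<Longrightarrow> H (t *\<^sub>R x) = H x" and fin: "\<kappa> < \<infinity>"
  shows "distr (density lborel H) borel norm
       = density lborel (\<lambda>r. \<kappa> * (ennreal (real DIM('a) * r ^ (DIM('a) - 1)) * indicator {0..} r))"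
    (is "?M = ?D")
proof -
  have M_lessThan: "emeasure ?M {..<a} = \<kappa> * ennreal (if a > 0 then a ^ DIM('a) else 0)" for a
  proof -
    have "norm -` {..<a} \<inter> space (density lborel H) = ball 0 a"
      by (auto simp: dist_norm)
    then have "emeasure ?M {..<a} = (\<integral>\<^sup>+x. H x * indicator (ball 0 a) x \<partial>lborel)"
      by (simp add: emeasure_distr emeasure_density mult.commute)
    then show ?thesis
      using nn_integral_homogeneous_ball[of H a] hom unfolding \<kappa>_def
      by (auto simp: ball_empty mult.commute)
  qed
  have lessThan_eq: "emeasure ?M {..<a} = emeasure ?D {..<a}" for a
  proof -
    have "emeasure ?D {..<a} = (\<integral>\<^sup>+r. \<kappa> * (ennreal (real DIM('a) * r ^ (DIM('a) - 1))
        * indicator {0..} r * indicator {..<a} r) \<partial>lborel)"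
      by (auto simp: emeasure_density mult.assoc intro!: nn_integral_cong)
    also have "\<dots> = \<kappa> * (\<integral>\<^sup>+r. ennreal (real DIM('a) * r ^ (DIM('a) - 1))
        * indicator {0..} r * indicator {..<a} r \<partial>lborel)"
      by (rule nn_integral_cmult) measurable
    also have "\<dots> = emeasure ?M {..<a}"
      by (simp only: nn_integral_radial_weight_lessThan[OF DIM_positive] M_lessThan)
    finally show ?thesis ..
  qed
  show ?thesis
  proof (rule measure_eqI_generator_eq_countable[where E="range lessThan" and A="lessThan ` \<rat>"])
    show "Int_stable (range lessThan :: real set set)"
      by (auto simp: Int_stable_def greaterThan_Int_greaterThan)
    show "sets ?M = sigma_sets UNIV (range lessThan)" "sets ?D = sigma_sets UNIV (range lessThan)"
      by (simp_all add: borel_Iio)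
    show "emeasure ?M X = emeasure ?D X" if "X \<in> range lessThan" for X
      using that lessThan_eq by blast
    have "\<exists>q\<in>\<rat>. x < q" for x :: real
      using Rats_dense_in_real[of x "x + 1"] by auto
    then show "\<Union> (lessThan ` \<rat>) = (UNIV :: real set)"
      by blast
    show "emeasure ?M X \<noteq> \<infinity>" if "X \<in> lessThan ` \<rat>" for X
      using that fin by (auto simp: M_lessThan ennreal_mult_eq_top_iff)
  qed (auto simp: countable_rat)
qed

lemma nn_integral_homogeneous_radial:
  fixes H :: "'a::euclidean_space \<Rightarrow> ennreal" and F :: "real \<Rightarrow> ennreal"
  assumes [measurable]: "H \<in> borel_measurable borel" "F \<in> borel_measurable borel"
    and hom: "\<And>t x. t > 0 \<Longrightarrow> H (t *\<^sub>R x) = H x"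
    and fin: "(\<integral>\<^sup>+x. H x * indicator (ball 0 1) x \<partial>lborel) < \<infinity>"
  shows "(\<integral>\<^sup>+x. H x * F (norm x) \<partial>lborel)
       = (\<integral>\<^sup>+x. H x * indicator (ball 0 1) x \<partial>lborel)
         * (\<integral>\<^sup>+r. ennreal (real DIM('a) * r ^ (DIM('a) - 1)) * indicator {0..} r * F r \<partial>lborel)"
proof -
  let ?\<kappa> = "\<integral>\<^sup>+x. H x * indicator (ball 0 1) x \<partial>lborel"
  have "(\<integral>\<^sup>+x. H x * F (norm x) \<partial>lborel) = (\<integral>\<^sup>+r. F r \<partial>distr (density lborel H) borel norm)"
    by (simp add: nn_integral_density nn_integral_distr)
  also have "\<dots> = (\<integral>\<^sup>+r. ?\<kappa> * (ennreal (real DIM('a) * r ^ (DIM('a) - 1)) * indicator {0..} r * F r) \<partial>lborel)"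
    by (simp add: distr_norm_density_homogeneous[OF _ hom fin] nn_integral_density mult.assoc)
  also have "\<dots> = ?\<kappa> * (\<integral>\<^sup>+r. ennreal (real DIM('a) * r ^ (DIM('a) - 1)) * indicator {0..} r * F r \<partial>lborel)"
    by (rule nn_integral_cmult) measurable
  finally show ?thesis .
qed

lemma nn_integral_power_exp:
  fixes a :: real
  assumes a: "a > 0"
  shows "(\<integral>\<^sup>+r. ennreal (r ^ k * exp (- a * r)) * indicator {0..} r \<partial>lborel) = ennreal (fact k / a ^ Suc k)"
proof -
  have "(\<integral>\<^sup>+r. ennreal (r ^ k * exp (- a * r)) * indicator {0..} r \<partial>lborel)
      = (\<integral>\<^sup>+r. ennreal (fact k / a ^ Suc k) * ennreal (erlang_density k a r * r ^ 0) \<partial>lborel)"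
    using a by (intro nn_integral_cong)
      (auto simp: erlang_density_def indicator_def ennreal_mult'[symmetric])
  also have "\<dots> = ennreal (fact k / a ^ Suc k)"
    using nn_integral_erlang_ith_moment[OF a, of k 0] by (simp add: nn_integral_cmult)
  finally show ?thesis .
qed

lemma nn_integral_homogeneous_power_exp_norm:
  fixes H :: "'a::euclidean_space \<Rightarrow> ennreal" and a :: real
  assumes [measurable]: "H \<in> borel_measurable borel"
    and hom: "\<And>t x. t > 0 \<Longrightarrow> H (t *\<^sub>R x) = H x"
    and fin: "(\<integral>\<^sup>+x. H x * indicator (ball 0 1) x \<partial>lborel) < \<infinity>"
    and a: "a > 0"
  shows "(\<integral>\<^sup>+x. H x * ennreal (norm x ^ j * exp (- a * norm x)) \<partial>lborel)
       = (\<integral>\<^sup>+x. H x * indicator (ball 0 1) x \<partial>lborel)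
         * ennreal (real DIM('a) * fact (DIM('a) - 1 + j) / a ^ (DIM('a) + j))"
proof -
  let ?n = "DIM('a)"
  have "(\<integral>\<^sup>+r. ennreal (real ?n * r ^ (?n - 1)) * indicator {0..} r * ennreal (r ^ j * exp (- a * r)) \<partial>lborel)
      = (\<integral>\<^sup>+r. ennreal (real ?n) * (ennreal (r ^ (?n - 1 + j) * exp (- a * r)) * indicator {0..} r) \<partial>lborel)"
  proof (intro nn_integral_cong)
    fix r :: real
    have "real ?n * r ^ (?n - 1) * (r ^ j * exp (- a * r)) = real ?n * (r ^ (?n - 1 + j) * exp (- a * r))"
      by (simp only: power_add mult_ac)
    then show "ennreal (real ?n * r ^ (?n - 1)) * indicator {0..} r * ennreal (r ^ j * exp (- a * r))
        = ennreal (real ?n) * (ennreal (r ^ (?n - 1 + j) * exp (- a * r)) * indicator {0..} r)"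
      by (auto simp: indicator_def ennreal_mult'[symmetric] simp del: of_nat_Suc)
  qed
  also have "\<dots> = ennreal (real ?n)
      * (\<integral>\<^sup>+r. ennreal (r ^ (?n - 1 + j) * exp (- a * r)) * indicator {0..} r \<partial>lborel)"
    by (rule nn_integral_cmult) measurable
  also have "\<dots> = ennreal (real ?n * fact (?n - 1 + j) / a ^ (?n + j))"
    unfolding nn_integral_power_exp[OF a] by (simp add: ennreal_mult'[symmetric])
  finally show ?thesis
    using nn_integral_homogeneous_radial[OF _ _ hom fin, where F="\<lambda>r. ennreal (r ^ j * exp (- a * r))"]
    by simp
qed

lemma nn_integral_homogeneous_norm_sq_exp:
  fixes H :: "'a::euclidean_space \<Rightarrow> ennreal" and a :: real
  assumes [measurable]: "H \<in> borel_measurable borel"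
    and hom: "\<And>t x. t > 0 \<Longrightarrow> H (t *\<^sub>R x) = H x"
    and fin: "(\<integral>\<^sup>+x. H x * indicator (ball 0 1) x \<partial>lborel) < \<infinity>"
    and a: "a > 0"
  shows "(\<integral>\<^sup>+x. H x * ennreal ((norm x)\<^sup>2 * exp (- a * norm x)) \<partial>lborel)
       = ennreal (real DIM('a) * (real DIM('a) + 1) / a\<^sup>2)
         * (\<integral>\<^sup>+x. H x * ennreal (exp (- a * norm x)) \<partial>lborel)"
    and "(\<integral>\<^sup>+x. H x * ennreal (exp (- a * norm x)) \<partial>lborel) < \<infinity>"
proof -
  let ?n = "DIM('a)" and ?\<kappa> = "\<integral>\<^sup>+x. H x * indicator (ball 0 1) x \<partial>lborel"
  have moment: "(\<integral>\<^sup>+x. H x * ennreal (norm x ^ j * exp (- a * norm x)) \<partial>lborel)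
      = ?\<kappa> * ennreal (real ?n * fact (?n - 1 + j) / a ^ (?n + j))" for j
    by (rule nn_integral_homogeneous_power_exp_norm[OF _ hom fin a]) simp
  define c where "c = real ?n * (real ?n + 1) / a\<^sup>2"
  define X where "X = real ?n * fact (?n - 1) / a ^ ?n"
  have "fact ?n = real ?n * (fact (?n - 1) :: real)"
    by (rule fact_reduce) simp
  then have "fact (?n - 1 + 2) = (real ?n + 1) * real ?n * (fact (?n - 1) :: real)"
    by (simp add: Suc_diff_le)
  then have "real ?n * fact (?n - 1 + 2) / a ^ (?n + 2) = c * X"
    using a by (simp add: c_def X_def power_add power2_eq_square field_simps)
  moreover have "c \<ge> 0" "X \<ge> 0"
    using a by (simp_all add: c_def X_def)
  ultimately show "(\<integral>\<^sup>+x. H x * ennreal ((norm x)\<^sup>2 * exp (- a * norm x)) \<partial>lborel)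
       = ennreal c * (\<integral>\<^sup>+x. H x * ennreal (exp (- a * norm x)) \<partial>lborel)"
    using moment[of 2] moment[of 0]
    unfolding power_0 mult_1_left add_0_right X_def[symmetric]
    by (simp add: ennreal_mult mult.left_commute)
  show "(\<integral>\<^sup>+x. H x * ennreal (exp (- a * norm x)) \<partial>lborel) < \<infinity>"
    using moment[of 0] fin by (simp add: ennreal_mult_less_top)
qed

definition l2_normalizer :: "real \<Rightarrow> nat \<Rightarrow> real" where
  "l2_normalizer eps n = eps ^ n * Gamma (real n / 2 + 1) / (pi powr (real n / 2) * Gamma (real n + 1))"

lemma l2_density_altdef: "l2_density eps (v::real^'n) = l2_normalizer eps CARD('n) * exp (- eps * norm v)"
  by (simp add: l2_density_def l2_normalizer_def)

lemma l2_normalizer_pos: "eps > 0 \<Longrightarrow> l2_normalizer eps n > 0"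
  by (simp add: l2_normalizer_def)

lemma l2_normalizer_unit_ball_vol:
  assumes "eps > 0" "n > 0"
  shows "l2_normalizer eps n * unit_ball_vol (real n) * (real n * fact (n - 1) / eps ^ n) = 1"
proof -
  define P where "P = pi powr (real n / 2)"
  define G where "G = Gamma (real n / 2 + 1)"
  have "Gamma (real n + 1) = fact n"
    using Gamma_fact[of n] by (simp add: add.commute)
  also have "fact n = real n * (fact (n - 1) :: real)"
    using \<open>n > 0\<close> by (rule fact_reduce)
  finally have C: "l2_normalizer eps n = eps ^ n * G / (P * (real n * fact (n - 1)))"
    by (simp add: l2_normalizer_def P_def G_def)
  have V: "unit_ball_vol (real n) = P / G"
    by (simp add: unit_ball_vol_def P_def G_def)
  have "G > 0" "P > 0"
    by (simp_all add: G_def P_def)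
  then show ?thesis
    unfolding C V using assms by (simp add: field_simps)
qed

lemma l2_density_nonneg: "eps > 0 \<Longrightarrow> l2_density eps v \<ge> 0"
  by (simp add: l2_density_altdef l2_normalizer_pos less_imp_le)

lemma l2_density_le_at_zero: "eps > 0 \<Longrightarrow> l2_density eps (v::real^'n) \<le> l2_density eps (0::real^'n)"
  by (simp add: l2_density_altdef l2_normalizer_pos less_imp_le mult_left_le)

lemma l2_density_uminus: "l2_density eps (- v) = l2_density eps v"
  by (simp add: l2_density_def)

lemma borel_measurable_l2_density [measurable]: "l2_density eps \<in> borel_measurable borel"
  unfolding l2_density_def[abs_def] by measurable

lemma nn_integral_l2_density:
  fixes eps :: real
  assumes eps: "eps > 0"
  shows "(\<integral>\<^sup>+(v::real^'n). ennreal (l2_density eps v) \<partial>lborel) = 1"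
proof -
  let ?n = "CARD('n)" and ?C = "l2_normalizer eps CARD('n)"
  have "(\<integral>\<^sup>+(v::real^'n). ennreal (l2_density eps v) \<partial>lborel)
      = (\<integral>\<^sup>+(v::real^'n). ennreal ?C * ennreal (norm v ^ 0 * exp (- eps * norm v)) \<partial>lborel)"
    using eps by (simp add: l2_density_altdef l2_normalizer_pos ennreal_mult less_imp_le)
  also have "\<dots> = (\<integral>\<^sup>+(v::real^'n). ennreal ?C * indicator (ball 0 1) v \<partial>lborel)
                   * ennreal (real ?n * fact (?n - 1) / eps ^ ?n)"
    using eps emeasure_lborel_ball_finite[of "0::real^'n" 1]
    by (subst nn_integral_homogeneous_power_exp_norm)
       (auto simp: nn_integral_cmult_indicator ennreal_mult_less_top)
  also have "(\<integral>\<^sup>+(v::real^'n). ennreal ?C * indicator (ball 0 1) v \<partial>lborel)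
      = ennreal (?C * unit_ball_vol (real ?n))"
    using eps by (simp add: nn_integral_cmult_indicator emeasure_ball l2_normalizer_pos ennreal_mult less_imp_le)
  also have "ennreal (?C * unit_ball_vol (real ?n)) * ennreal (real ?n * fact (?n - 1) / eps ^ ?n)
      = ennreal (?C * unit_ball_vol (real ?n) * (real ?n * fact (?n - 1) / eps ^ ?n))"
    using eps by (intro ennreal_mult[symmetric]) (simp_all add: l2_normalizer_pos less_imp_le)
  also have "\<dots> = 1"
    using l2_normalizer_unit_ball_vol[OF eps, of ?n] by (simp only: zero_less_card_finite ennreal_1)
  finally show ?thesis .
qed

lemma nn_integral_l2_density_norm_sq:
  fixes eps :: real
  assumes eps: "eps > 0"
  shows "(\<integral>\<^sup>+(v::real^'n). ennreal (l2_density eps v * (norm v)\<^sup>2) \<partial>lborel)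
       = ennreal (real CARD('n) * (real CARD('n) + 1) / eps\<^sup>2)"
proof -
  let ?C = "l2_normalizer eps CARD('n)"
  have const: "ennreal (l2_density eps v * f) = ennreal ?C * ennreal (f * exp (- eps * norm v))"
    if "f \<ge> 0" for v :: "real^'n" and f
    using eps that by (simp add: l2_density_altdef l2_normalizer_pos ennreal_mult less_imp_le mult_ac)
  have "(\<integral>\<^sup>+(v::real^'n). ennreal (l2_density eps v * (norm v)\<^sup>2) \<partial>lborel)
      = (\<integral>\<^sup>+(v::real^'n). ennreal ?C * ennreal ((norm v)\<^sup>2 * exp (- eps * norm v)) \<partial>lborel)"
    by (simp add: const)
  also have "\<dots> = ennreal (real CARD('n) * (real CARD('n) + 1) / eps\<^sup>2)
      * (\<integral>\<^sup>+(v::real^'n). ennreal ?C * ennreal (exp (- eps * norm v)) \<partial>lborel)"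
    using eps emeasure_lborel_ball_finite[of "0::real^'n" 1]
    by (subst nn_integral_homogeneous_norm_sq_exp)
       (auto simp: nn_integral_cmult_indicator ennreal_mult_less_top)
  also have "(\<integral>\<^sup>+(v::real^'n). ennreal ?C * ennreal (exp (- eps * norm v)) \<partial>lborel) = 1"
    using const[of 1] nn_integral_l2_density[OF eps, where 'n='n] by simp
  finally show ?thesis
    by simp
qed

section \<open>Densities satisfying the privacy constraint\<close>

definition radial_exp_extension :: "real \<Rightarrow> real \<Rightarrow> ('a::real_normed_vector \<Rightarrow> real) \<Rightarrow> 'a \<Rightarrow> real" where
  "radial_exp_extension eps \<rho> f x = f ((\<rho> / norm x) *\<^sub>R x) * exp (eps * (\<rho> - norm x))"

(* Nonnegativity of f is needed only at x = 0, where rho / norm x = 0 and the extension is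
   f 0 * exp (eps * rho). *)
lemma radial_exp_extension_compare:
  fixes f :: "'a::real_normed_vector \<Rightarrow> real"
  assumes lip: "\<And>a b. f a \<le> exp (eps * norm (a - b)) * f b"
    and nonneg: "\<And>x. f x \<ge> 0" and "eps \<ge> 0" and "\<rho> > 0"
  shows "(f x - radial_exp_extension eps \<rho> f x) * ((norm x)\<^sup>2 - \<rho>\<^sup>2) \<ge> 0"
proof -
  let ?G = "radial_exp_extension eps \<rho> f" and ?y = "(\<rho> / norm x) *\<^sub>R x"
  have dist_y: "norm (x - ?y) = \<bar>norm x - \<rho>\<bar>" if "x \<noteq> 0"
  proof -
    have "x - ?y = (1 - \<rho> / norm x) *\<^sub>R x"
      by (simp add: scaleR_diff_left)
    then have "norm (x - ?y) = \<bar>1 - \<rho> / norm x\<bar> * norm x"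
      by simp
    also have "\<dots> = \<bar>(1 - \<rho> / norm x) * norm x\<bar>"
      by (simp add: abs_mult)
    also have "(1 - \<rho> / norm x) * norm x = norm x - \<rho>"
      using that by (simp add: field_simps)
    finally show ?thesis .
  qed
  consider "norm x \<ge> \<rho>" | "norm x < \<rho>"
    by linarith
  then show ?thesis
  proof cases
    case 1
    then have "x \<noteq> 0"
      using \<open>\<rho> > 0\<close> by auto
    with 1 have "f ?y \<le> exp (eps * (norm x - \<rho>)) * f x"
      using lip[of ?y x] dist_y by (simp add: norm_minus_commute)
    then have "?G x \<le> exp (eps * (norm x - \<rho>)) * exp (eps * (\<rho> - norm x)) * f x"
      unfolding radial_exp_extension_def by (simp add: mult_right_mono mult_ac)
    then have "?G x \<le> f x"
      by (simp add: exp_add[symmetric] algebra_simps)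
    moreover have "\<rho>\<^sup>2 \<le> (norm x)\<^sup>2"
      using 1 \<open>\<rho> > 0\<close> by (simp add: power_mono)
    ultimately show ?thesis
      by simp
  next
    case 2
    have "f x \<le> ?G x"
    proof (cases "x = 0")
      case True
      have "f 0 * 1 \<le> f 0 * exp (eps * \<rho>)"
        using nonneg[of 0] assms(3,4) by (intro mult_left_mono) auto
      with True show ?thesis
        by (simp add: radial_exp_extension_def)
    next
      case False
      with 2 show ?thesis
        using lip[of x ?y] dist_y by (simp add: radial_exp_extension_def mult.commute)
    qed
    moreover have "(norm x)\<^sup>2 \<le> \<rho>\<^sup>2"
      using 2 by (simp add: power_mono)
    ultimately show ?thesis
      by (simp add: mult_nonpos_nonpos)
  qed
qed

lemma lipschitz_density_norm_sq_ge:
  fixes h :: "'a::euclidean_space \<Rightarrow> real"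
  assumes [measurable]: "h \<in> borel_measurable borel"
    and nonneg: "\<And>x. h x \<ge> 0" and bounded: "\<And>x. h x \<le> B"
    and lip: "\<And>a b. h a \<le> exp (eps * norm (a - b)) * h b" and eps: "eps > 0"
    and total: "(\<integral>\<^sup>+x. ennreal (h x) \<partial>lborel) = 1"
  shows "ennreal (real DIM('a) * (real DIM('a) + 1) / eps\<^sup>2) \<le> (\<integral>\<^sup>+x. ennreal (h x * (norm x)\<^sup>2) \<partial>lborel)"
proof -
  define c where "c = real DIM('a) * (real DIM('a) + 1) / eps\<^sup>2"
  define \<rho> where "\<rho> = sqrt c"
  define G where "G = radial_exp_extension eps \<rho> h"
  define H where "H x = ennreal (h ((\<rho> / norm x) *\<^sub>R x) * exp (eps * \<rho>))" for x :: 'a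
  have "c > 0"
    using eps by (simp add: c_def)
  then have \<rho>: "\<rho> > 0" "\<rho>\<^sup>2 = c"
    by (simp_all add: \<rho>_def)
  have G_nonneg: "G x \<ge> 0" for x
    by (simp add: G_def radial_exp_extension_def nonneg)
  have H_meas [measurable]: "H \<in> borel_measurable borel"
    unfolding H_def[abs_def] by measurable
  have [measurable]: "G \<in> borel_measurable borel"
    unfolding G_def radial_exp_extension_def[abs_def] by measurable
  have H_hom: "H (t *\<^sub>R x) = H x" if "t > 0" for t x
  proof -
    have "\<rho> / norm (t *\<^sub>R x) * t = \<rho> / norm x"
      using that by simp
    then show ?thesis
      by (simp add: H_def)
  qed
  have "(\<integral>\<^sup>+x. H x * indicator (ball 0 1) x \<partial>lborel)
      \<le> (\<integral>\<^sup>+(x::'a). ennreal (B * exp (eps * \<rho>)) * indicator (ball 0 1) x \<partial>lborel)"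
    by (intro nn_integral_mono) (auto simp: H_def indicator_def bounded intro!: ennreal_leI)
  also have "\<dots> < \<infinity>"
    using emeasure_lborel_ball_finite[of "0::'a" 1]
    by (simp add: nn_integral_cmult_indicator ennreal_mult_less_top)
  finally have H_fin: "(\<integral>\<^sup>+x. H x * indicator (ball 0 1) x \<partial>lborel) < \<infinity>" .
  have G_eq: "ennreal (G x * f) = H x * ennreal (f * exp (- eps * norm x))" if "f \<ge> 0" for x f
  proof -
    have "exp (eps * (\<rho> - norm x)) = exp (eps * \<rho>) * exp (- eps * norm x)"
      by (simp add: algebra_simps flip: exp_add)
    then show ?thesis
      using that nonneg by (simp add: G_def H_def radial_exp_extension_def ennreal_mult[symmetric] mult_ac)
  qed
  have G_exp: "ennreal (G x) = H x * ennreal (exp (- eps * norm x))" for x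
    using G_eq[of 1 x] by simp
  have G_moments: "(\<integral>\<^sup>+x. ennreal (G x * (norm x)\<^sup>2) \<partial>lborel) = ennreal c * (\<integral>\<^sup>+x. ennreal (G x) \<partial>lborel)"
    "(\<integral>\<^sup>+x. ennreal (G x) \<partial>lborel) < \<infinity>"
    using nn_integral_homogeneous_norm_sq_exp[OF H_meas H_hom H_fin eps]
    by (simp_all only: G_eq[OF zero_le_power2] G_exp c_def)
  have pointwise: "c * h x + G x * (norm x)\<^sup>2 \<le> h x * (norm x)\<^sup>2 + c * G x" for x
  proof -
    have "0 \<le> (h x - G x) * ((norm x)\<^sup>2 - c)"
      using radial_exp_extension_compare[OF lip nonneg _ \<rho>(1)] eps \<rho>(2) by (simp add: G_def)
    then show ?thesis
      by (simp add: algebra_simps)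
  qed
  let ?I = "\<integral>\<^sup>+x. ennreal (h x * (norm x)\<^sup>2) \<partial>lborel" and ?G = "\<integral>\<^sup>+x. ennreal (G x) \<partial>lborel"
  have "ennreal c + ennreal c * ?G = ennreal c + (\<integral>\<^sup>+x. ennreal (G x * (norm x)\<^sup>2) \<partial>lborel)"
    by (simp only: G_moments(1))
  also have "\<dots> = (\<integral>\<^sup>+x. ennreal (c * h x) + ennreal (G x * (norm x)\<^sup>2) \<partial>lborel)"
    using \<open>c > 0\<close> nonneg total by (simp add: nn_integral_add ennreal_mult nn_integral_cmult)
  also have "\<dots> \<le> (\<integral>\<^sup>+x. ennreal (h x * (norm x)\<^sup>2) + ennreal (c * G x) \<partial>lborel)"
    using pointwise \<open>c > 0\<close> nonneg G_nonneg
    by (intro nn_integral_mono) (simp add: ennreal_plus[symmetric] del: ennreal_plus)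
  also have "\<dots> = ?I + ennreal c * ?G"
    using \<open>c > 0\<close> G_nonneg by (simp add: nn_integral_add ennreal_mult nn_integral_cmult)
  finally have "ennreal c * ?G + ennreal c \<le> ennreal c * ?G + ?I"
    by (simp only: add.commute)
  then show ?thesis
    using G_moments(2) by (auto simp: c_def[symmetric] ennreal_add_left_cancel_le ennreal_mult_eq_top_iff)
qed

section \<open>Smoothing the noise distribution\<close>

lemma lipschitz_private_additive_nn_integral:
  fixes g :: "'a::euclidean_space measure" and \<phi> :: "'a \<Rightarrow> ennreal"
  assumes Q_private: "lipschitz_private eps (additive_mech g)" and "prob_space g"
    and sets_g [measurable_cong]: "sets g = sets borel"
    and [measurable]: "\<phi> \<in> borel_measurable borel"
  shows "(\<integral>\<^sup>+v. \<phi> (u + v) \<partial>g) \<le> ennreal (exp (eps * norm (u - u'))) * (\<integral>\<^sup>+v. \<phi> (u' + v) \<partial>g)"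
proof -
  interpret prob_space g by fact
  let ?Q = "additive_mech g" and ?e = "ennreal (exp (eps * norm (u - u')))"
  have sets_Q [simp, measurable_cong]: "sets (?Q w) = sets borel" for w
    by (simp add: additive_mech_def)
  have finite_Q: "finite_measure (?Q w)" for w
    unfolding additive_mech_def by (intro prob_space.finite_measure prob_space_distr) simp
  have "?Q u \<le> scale_measure ?e (?Q u')"
  proof (subst le_measure)
    show "sets (?Q u) = sets (scale_measure ?e (?Q u'))"
      by simp
    show "\<forall>A\<in>sets (?Q u). emeasure (?Q u) A \<le> emeasure (scale_measure ?e (?Q u')) A"
    proof
      fix A assume "A \<in> sets (?Q u)"
      then have "measure (?Q u) A \<le> exp (eps * norm (u - u')) * measure (?Q u') A"
        using Q_private by (simp add: lipschitz_private_def)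
      then show "emeasure (?Q u) A \<le> emeasure (scale_measure ?e (?Q u')) A"
        by (simp add: finite_measure.emeasure_eq_measure[OF finite_Q] ennreal_mult[symmetric])
    qed
  qed
  then have "(\<integral>\<^sup>+z. \<phi> z \<partial>?Q u) \<le> ?e * (\<integral>\<^sup>+z. \<phi> z \<partial>?Q u')"
    using nn_integral_mono_measure[of "?Q u" "scale_measure ?e (?Q u')" \<phi>]
      nn_integral_scale_measure[of \<phi> "?Q u'" ?e]
    by simp
  then show ?thesis
    by (simp add: additive_mech_def nn_integral_distr)
qed

lemma norm_add_sq_le:
  fixes v w :: "'a::real_normed_vector"
  assumes d: "d > 0"
  shows "(norm (v + w))\<^sup>2 \<le> (1 + d) * (norm v)\<^sup>2 + (1 + 1 / d) * (norm w)\<^sup>2"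
proof -
  have "(norm (v + w))\<^sup>2 \<le> (norm v + norm w)\<^sup>2"
    by (simp add: norm_triangle_ineq power_mono)
  also have "\<dots> = (1 + d) * (norm v)\<^sup>2 + (1 + 1 / d) * (norm w)\<^sup>2 - (d * norm v - norm w)\<^sup>2 / d"
    using d by (simp add: field_simps power2_eq_square)
  also have "\<dots> \<le> (1 + d) * (norm v)\<^sup>2 + (1 + 1 / d) * (norm w)\<^sup>2"
    using d by simp
  finally show ?thesis .
qed

lemma nn_integral_convolution:
  fixes g :: "'a::euclidean_space measure" and K f :: "'a \<Rightarrow> ennreal"
  assumes "sigma_finite_measure g" and [measurable_cong]: "sets g = sets borel"
    and [measurable]: "K \<in> borel_measurable borel" "f \<in> borel_measurable borel"
  shows "(\<integral>\<^sup>+x. (\<integral>\<^sup>+v. K (x - v) \<partial>g) * f x \<partial>lborel) = (\<integral>\<^sup>+v. (\<integral>\<^sup>+w. K w * f (v + w) \<partial>lborel) \<partial>g)"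
proof -
  interpret pair_sigma_finite lborel g
    by (simp add: pair_sigma_finite_def assms(1) lborel.sigma_finite_measure_axioms)
  have translate: "(\<integral>\<^sup>+x. K (x - v) * f x \<partial>lborel) = (\<integral>\<^sup>+w. K w * f (v + w) \<partial>lborel)" for v
    by (subst nn_integral_lborel_translate[where t=v]) simp_all
  have "(\<integral>\<^sup>+x. (\<integral>\<^sup>+v. K (x - v) \<partial>g) * f x \<partial>lborel) = (\<integral>\<^sup>+x. (\<integral>\<^sup>+v. K (x - v) * f x \<partial>g) \<partial>lborel)"
    by (simp add: nn_integral_multc)
  also have "\<dots> = (\<integral>\<^sup>+v. (\<integral>\<^sup>+x. K (x - v) * f x \<partial>lborel) \<partial>g)"
    by (rule Fubini'[symmetric]) measurable
  also have "\<dots> = (\<integral>\<^sup>+v. (\<integral>\<^sup>+w. K w * f (v + w) \<partial>lborel) \<partial>g)"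
    by (simp only: translate)
  finally show ?thesis .
qed

lemma lipschitz_private_convolution:
  fixes g :: "'a::euclidean_space measure" and K :: "'a \<Rightarrow> ennreal"
  assumes "lipschitz_private eps (additive_mech g)" "prob_space g" "sets g = sets borel"
    and [measurable]: "K \<in> borel_measurable borel" and K_uminus: "\<And>x. K (- x) = K x"
  shows "(\<integral>\<^sup>+v. K (a - v) \<partial>g) \<le> ennreal (exp (eps * norm (a - b))) * (\<integral>\<^sup>+v. K (b - v) \<partial>g)"
proof -
  have shift: "(\<integral>\<^sup>+v. K (u - v) \<partial>g) = (\<integral>\<^sup>+v. K (- u + v) \<partial>g)" for u
    by (rule nn_integral_cong) (metis K_uminus minus_diff_eq uminus_add_conv_diff)
  have "norm (- a - - b) = norm (a - b)"
    by (simp add: norm_minus_commute)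
  then show ?thesis
    using lipschitz_private_additive_nn_integral[OF assms(1-4), of "- a" "- b"]
    by (simp only: shift)
qed

lemma nn_integral_convolution_norm_sq_le:
  fixes g :: "'a::euclidean_space measure" and K :: "'a \<Rightarrow> real"
  assumes "prob_space g" and sets_g [measurable_cong]: "sets g = sets borel"
    and [measurable]: "K \<in> borel_measurable borel" and K_nonneg: "\<And>x. K x \<ge> 0"
    and K_total: "(\<integral>\<^sup>+w. ennreal (K w) \<partial>lborel) = 1" and d: "d > 0"
  shows "(\<integral>\<^sup>+x. (\<integral>\<^sup>+v. ennreal (K (x - v)) \<partial>g) * ennreal ((norm x)\<^sup>2) \<partial>lborel)
       \<le> ennreal (1 + d) * (\<integral>\<^sup>+v. ennreal ((norm v)\<^sup>2) \<partial>g)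
         + ennreal (1 + 1 / d) * (\<integral>\<^sup>+w. ennreal (K w * (norm w)\<^sup>2) \<partial>lborel)"
proof -
  interpret prob_space g by fact
  let ?M2 = "\<integral>\<^sup>+w. ennreal (K w * (norm w)\<^sup>2) \<partial>lborel"
  have pointwise: "ennreal (K w) * ennreal ((norm (v + w))\<^sup>2)
      \<le> ennreal ((1 + d) * (norm v)\<^sup>2) * ennreal (K w) + ennreal (1 + 1 / d) * ennreal (K w * (norm w)\<^sup>2)"
    for v w :: 'a
  proof -
    have "K w * (norm (v + w))\<^sup>2 \<le> K w * ((1 + d) * (norm v)\<^sup>2 + (1 + 1 / d) * (norm w)\<^sup>2)"
      using norm_add_sq_le[OF d] K_nonneg by (intro mult_left_mono) auto
    then have "ennreal (K w * (norm (v + w))\<^sup>2)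
        \<le> ennreal ((1 + d) * (norm v)\<^sup>2 * K w + (1 + 1 / d) * (K w * (norm w)\<^sup>2))"
      by (intro ennreal_leI) (simp add: algebra_simps)
    moreover have "0 \<le> (1 + d) * (norm v)\<^sup>2 * K w" "0 \<le> (1 + 1 / d) * (K w * (norm w)\<^sup>2)"
      using K_nonneg[of w] d by simp_all
    ultimately show ?thesis
      using K_nonneg[of w] d by (simp add: ennreal_mult ennreal_plus)
  qed
  have "(\<integral>\<^sup>+x. (\<integral>\<^sup>+v. ennreal (K (x - v)) \<partial>g) * ennreal ((norm x)\<^sup>2) \<partial>lborel)
      = (\<integral>\<^sup>+v. (\<integral>\<^sup>+w. ennreal (K w) * ennreal ((norm (v + w))\<^sup>2) \<partial>lborel) \<partial>g)"
    by (rule nn_integral_convolution) (simp_all add: prob_space_imp_sigma_finite assms(1) sets_g)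
  also have "\<dots> \<le> (\<integral>\<^sup>+v. ennreal ((1 + d) * (norm v)\<^sup>2) + ennreal (1 + 1 / d) * ?M2 \<partial>g)"
  proof (intro nn_integral_mono)
    fix v :: 'a
    have "(\<integral>\<^sup>+w. ennreal (K w) * ennreal ((norm (v + w))\<^sup>2) \<partial>lborel)
        \<le> (\<integral>\<^sup>+w. ennreal ((1 + d) * (norm v)\<^sup>2) * ennreal (K w)
              + ennreal (1 + 1 / d) * ennreal (K w * (norm w)\<^sup>2) \<partial>lborel)"
      by (intro nn_integral_mono pointwise)
    also have "\<dots> = ennreal ((1 + d) * (norm v)\<^sup>2) * (\<integral>\<^sup>+w. ennreal (K w) \<partial>lborel) + ennreal (1 + 1 / d) * ?M2"
      by (subst nn_integral_add) (simp_all add: nn_integral_cmult)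
    also have "\<dots> = ennreal ((1 + d) * (norm v)\<^sup>2) + ennreal (1 + 1 / d) * ?M2"
      by (simp only: K_total mult_1_right)
    finally show "(\<integral>\<^sup>+w. ennreal (K w) * ennreal ((norm (v + w))\<^sup>2) \<partial>lborel)
        \<le> ennreal ((1 + d) * (norm v)\<^sup>2) + ennreal (1 + 1 / d) * ?M2" .
  qed
  also have "\<dots> = ennreal (1 + d) * (\<integral>\<^sup>+v. ennreal ((norm v)\<^sup>2) \<partial>g) + ennreal (1 + 1 / d) * ?M2"
    using d by (subst nn_integral_add) (simp_all add: ennreal_mult nn_integral_cmult emeasure_space_1)
  finally show ?thesis .
qed

lemma lipschitz_private_convolution_norm_sq_ge:
  fixes g :: "'a::euclidean_space measure" and K :: "'a \<Rightarrow> real"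
  assumes eps: "eps > 0" and "prob_space g" and sets_g [measurable_cong]: "sets g = sets borel"
    and Q_private: "lipschitz_private eps (additive_mech g)"
    and [measurable]: "K \<in> borel_measurable borel" and K_nonneg: "\<And>x. K x \<ge> 0"
    and K_bounded: "\<And>x. K x \<le> B" and K_uminus: "\<And>x. K (- x) = K x"
    and K_total: "(\<integral>\<^sup>+w. ennreal (K w) \<partial>lborel) = 1"
  shows "ennreal (real DIM('a) * (real DIM('a) + 1) / eps\<^sup>2)
       \<le> (\<integral>\<^sup>+x. (\<integral>\<^sup>+v. ennreal (K (x - v)) \<partial>g) * ennreal ((norm x)\<^sup>2) \<partial>lborel)"
proof -
  interpret prob_space g by fact
  define h where "h x = (\<integral>\<^sup>+v. ennreal (K (x - v)) \<partial>g)" for x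
  define hr where "hr x = enn2real (h x)" for x
  have [measurable]: "h \<in> borel_measurable borel"
    unfolding h_def[abs_def] by measurable
  have "h x \<le> (\<integral>\<^sup>+v. ennreal B \<partial>g)" for x
    unfolding h_def by (intro nn_integral_mono ennreal_leI K_bounded)
  then have h_le: "h x \<le> ennreal B" for x
    by (simp add: emeasure_space_1)
  then have h_eq: "h x = ennreal (hr x)" for x
    unfolding hr_def by (metis ennreal_enn2real ennreal_less_top order.strict_trans1)
  have hr_nonneg: "hr x \<ge> 0" and hr_bounded: "hr x \<le> B" for x
    using h_le[of x] K_nonneg[of 0] K_bounded[of 0] by (simp_all add: hr_def enn2real_leI)
  have hr_lip: "hr a \<le> exp (eps * norm (a - b)) * hr b" for a b
  proof -
    have "h a \<le> ennreal (exp (eps * norm (a - b))) * h b"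
      unfolding h_def
      by (rule lipschitz_private_convolution[OF Q_private \<open>prob_space g\<close> sets_g]) (simp_all add: K_uminus)
    then show ?thesis
      by (simp add: h_eq hr_nonneg ennreal_mult[symmetric])
  qed
  have "(\<integral>\<^sup>+x. ennreal (hr x) \<partial>lborel) = (\<integral>\<^sup>+x. h x * 1 \<partial>lborel)"
    by (simp add: h_eq)
  also have "\<dots> = (\<integral>\<^sup>+v. (\<integral>\<^sup>+w. ennreal (K w) * 1 \<partial>lborel) \<partial>g)"
    unfolding h_def
    by (rule nn_integral_convolution) (simp_all add: prob_space_imp_sigma_finite \<open>prob_space g\<close> sets_g)
  finally have hr_total: "(\<integral>\<^sup>+x. ennreal (hr x) \<partial>lborel) = 1"
    by (simp add: K_total emeasure_space_1)
  have "ennreal (real DIM('a) * (real DIM('a) + 1) / eps\<^sup>2) \<le> (\<integral>\<^sup>+x. ennreal (hr x * (norm x)\<^sup>2) \<partial>lborel)"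
    using lipschitz_density_norm_sq_ge[OF _ hr_nonneg hr_bounded hr_lip eps hr_total] by (simp add: hr_def)
  also have "\<dots> = (\<integral>\<^sup>+x. h x * ennreal ((norm x)\<^sup>2) \<partial>lborel)"
    by (simp add: h_eq hr_nonneg ennreal_mult)
  finally show ?thesis
    by (simp only: h_def)
qed

lemma lipschitz_private_norm_sq_approx:
  fixes eps d :: real and g :: "(real^'n) measure"
  assumes eps: "eps > 0" and "prob_space g" and sets_g: "sets g = sets borel"
    and Q_private: "lipschitz_private eps (additive_mech g)" and d: "d > 0"
  shows "ennreal (real CARD('n) * (real CARD('n) + 1) / eps\<^sup>2)
       \<le> ennreal (1 + d) * (\<integral>\<^sup>+v. ennreal ((norm v)\<^sup>2) \<partial>g)
         + ennreal (real CARD('n) * (real CARD('n) + 1) * (d + d\<^sup>2))"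
proof -
  let ?m = "real CARD('n) * (real CARD('n) + 1)"
  define K :: "real^'n \<Rightarrow> real" where "K = l2_density (1 / d)"
  have "1 / d > 0"
    using d by simp
  then have K_nonneg: "K x \<ge> 0" and K_bounded: "K x \<le> K 0"
    and K_uminus: "K (- x) = K x" and K_total: "(\<integral>\<^sup>+w. ennreal (K w) \<partial>lborel) = 1" for x
    by (simp_all add: K_def l2_density_nonneg l2_density_le_at_zero l2_density_uminus nn_integral_l2_density)
  have "ennreal (?m / eps\<^sup>2) \<le> (\<integral>\<^sup>+x. (\<integral>\<^sup>+v. ennreal (K (x - v)) \<partial>g) * ennreal ((norm x)\<^sup>2) \<partial>lborel)"
    using lipschitz_private_convolution_norm_sq_ge[OF eps \<open>prob_space g\<close> sets_g Q_private _
        K_nonneg K_bounded K_uminus K_total]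
    by (simp add: K_def)
  also have "\<dots> \<le> ennreal (1 + d) * (\<integral>\<^sup>+v. ennreal ((norm v)\<^sup>2) \<partial>g)
      + ennreal (1 + 1 / d) * (\<integral>\<^sup>+w. ennreal (K w * (norm w)\<^sup>2) \<partial>lborel)"
    by (rule nn_integral_convolution_norm_sq_le[OF \<open>prob_space g\<close> sets_g _ K_nonneg K_total d])
      (simp add: K_def)
  also have "ennreal (1 + 1 / d) * (\<integral>\<^sup>+w. ennreal (K w * (norm w)\<^sup>2) \<partial>lborel) = ennreal (?m * (d + d\<^sup>2))"
  proof -
    have "(1 + 1 / d) * (?m / (1 / d)\<^sup>2) = ?m * (d + d\<^sup>2)"
      using d by (simp add: field_simps power2_eq_square)
    moreover have "ennreal (1 + 1 / d) * ennreal (?m / (1 / d)\<^sup>2) = ennreal ((1 + 1 / d) * (?m / (1 / d)\<^sup>2))"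
      using d by (intro ennreal_mult[symmetric]) auto
    ultimately show ?thesis
      unfolding K_def nn_integral_l2_density_norm_sq[OF \<open>1 / d > 0\<close>] by simp
  qed
  finally show ?thesis .
qed

theorem theorem3:
  fixes eps :: real and g :: "(real^'n) measure"
  assumes "eps > 0"
    and "prob_space g" and "sets g = sets borel"
    and "lipschitz_private eps (additive_mech g)"
  shows "(\<integral>\<^sup>+ v. ennreal ((norm v)\<^sup>2) \<partial>g)
           \<ge> (\<integral>\<^sup>+ (v::real^'n). ennreal (l2_density eps v * (norm v)\<^sup>2) \<partial>lborel)
         \<and> (\<integral>\<^sup>+ (v::real^'n). ennreal (l2_density eps v * (norm v)\<^sup>2) \<partial>lborel)
           = ennreal (real CARD('n) * (real CARD('n) + 1) / eps\<^sup>2)"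
proof -
  let ?m = "real CARD('n) * (real CARD('n) + 1)" and ?A = "\<integral>\<^sup>+ v. ennreal ((norm v)\<^sup>2) \<partial>g"
  let ?bound = "\<lambda>d. ennreal (1 + d) * ?A + ennreal (?m * (d + d\<^sup>2))"
  have "((\<lambda>d. ?bound d) \<longlongrightarrow> ?bound 0) (at_right 0)"
    by (intro tendsto_intros) auto
  moreover have "\<forall>\<^sub>F d in at_right 0. ennreal (?m / eps\<^sup>2) \<le> ?bound d"
    using eventually_at_right_less
    by (rule eventually_mono) (rule lipschitz_private_norm_sq_approx[OF assms])
  ultimately have "ennreal (?m / eps\<^sup>2) \<le> ?A"
    by (intro tendsto_le[OF trivial_limit_at_right_real _ tendsto_const]) simp_all
  then show ?thesis
    using nn_integral_l2_density_norm_sq[OF assms(1), where 'n='n] by simp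
qed

end
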